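(* For every integer $n$ (with $q\neq 0$ if $n<0$), $$h_{n+1}^2-qh_n^2=d^2\left[\left(b^2-a^2q\right)u_{2n+1}-aq\left(2b-ap\right)u_{2n}\right].$$
   Context: Let $p,q,a,b$ be complex numbers and let $d=\sqrt{p^2-4q}$. The sequence $(u_n)$ is defined by $u_0=0$, $u_1=1$, $u_n=pu_{n-1}-qu_{n-2}$. The Horadam-Lucas sequence $(h_n)$ is defined by $h_0=2b-ap$, $h_1=bp-2aq$, $h_n=ph_{n-1}-qh_{n-2}$. When $q\neq0$, both are extended to negative indices by $x_{n-2}=(px_{n-1}-x_n)/q$. *)

theory Defs
  imports Complex_Main
begin

fun rec_pos :: "complex \<Rightarrow> complex \<Rightarrow> complex \<Rightarrow> complex \<Rightarrow> nat \<Rightarrow> complex" where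
  "rec_pos p q x0 x1 0 = x0"
| "rec_pos p q x0 x1 (Suc 0) = x1"
| "rec_pos p q x0 x1 (Suc (Suc n)) = p * rec_pos p q x0 x1 (Suc n) - q * rec_pos p q x0 x1 n"

text \<open>Backward extension: rec_neg ... n = x_(-n), via x_(m-2) = (p x_(m-1) - x_m)/q.\<close>
fun rec_neg :: "complex \<Rightarrow> complex \<Rightarrow> complex \<Rightarrow> complex \<Rightarrow> nat \<Rightarrow> complex" where
  "rec_neg p q x0 x1 0 = x0"
| "rec_neg p q x0 x1 (Suc 0) = (p * x0 - x1) / q"
| "rec_neg p q x0 x1 (Suc (Suc n)) = (p * rec_neg p q x0 x1 (Suc n) - rec_neg p q x0 x1 n) / q"

definition rec_seq :: "complex \<Rightarrow> complex \<Rightarrow> complex \<Rightarrow> complex \<Rightarrow> int \<Rightarrow> complex" where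
  "rec_seq p q x0 x1 n = (if n \<ge> 0 then rec_pos p q x0 x1 (nat n) else rec_neg p q x0 x1 (nat (- n)))"

definition useq :: "complex \<Rightarrow> complex \<Rightarrow> int \<Rightarrow> complex" where
  "useq p q = rec_seq p q 0 1"

definition hseq :: "complex \<Rightarrow> complex \<Rightarrow> complex \<Rightarrow> complex \<Rightarrow> int \<Rightarrow> complex" where
  "hseq p q a b = rec_seq p q (2 * b - a * p) (b * p - 2 * a * q)"

definition dd :: "complex \<Rightarrow> complex \<Rightarrow> complex" where
  "dd p q = csqrt (p\<^sup>2 - 4 * q)"

end

theory Submission
  imports Defs
begin

text \<open>Whenever a sequence satisfies x(k+2) = p x(k+1) - q x(k), the quadratic form
  x(n+1)^2 - q x(n)^2 and the bisections x(2n), x(2n+1) satisfy, as functions of n, the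
  recurrence with characteristic polynomial X^2 - (p^2 - 2q) X + q^2, whose roots are
  the squares of the roots of X^2 - p X + q. Hence so does the difference of the two sides
  of the identity; it vanishes at n = 0 and n = 1 by direct computation, and therefore at
  every n, running the recurrence backwards (which needs q \<noteq> 0) for negative n.\<close>

lemma rec_seq_nonneg:
  "rec_seq p q x0 x1 (int m) = rec_pos p q x0 x1 m"
  by (simp add: rec_seq_def)

lemma rec_seq_nonpos:
  "rec_seq p q x0 x1 (- int m) = rec_neg p q x0 x1 m"
  by (cases "m = 0") (simp_all add: rec_seq_def)

lemma rec_seq_recurrence:
  assumes "n \<ge> 0 \<or> q \<noteq> 0"
  shows "rec_seq p q x0 x1 (n + 2) = p * rec_seq p q x0 x1 (n + 1) - q * rec_seq p q x0 x1 n"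
proof -
  consider (nonneg) "n \<ge> 0" | (minus_one) "n = -1" | (below) "n \<le> -2" by linarith
  then show ?thesis
  proof cases
    case nonneg
    then obtain m where "n = int m" using nonneg_eq_int by blast
    moreover have "int m + 2 = int (Suc (Suc m))" "int m + 1 = int (Suc m)" by simp_all
    ultimately show ?thesis by (simp only: rec_seq_nonneg rec_pos.simps)
  next
    case minus_one
    have "q \<noteq> 0" using assms minus_one by simp
    then show ?thesis
      using minus_one rec_seq_nonpos[of p q x0 x1 1] by (simp add: rec_seq_def)
  next
    case below
    define m where "m = nat (- n - 2)"
    have "q \<noteq> 0" using assms below by simp
    moreover have "n + 2 = - int m" "n + 1 = - int (Suc m)" "n = - int (Suc (Suc m))"
      using below by (simp_all add: m_def)
    ultimately show ?thesis by (simp only: rec_seq_nonpos rec_neg.simps) simp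
  qed
qed

lemma square_form_recurrence:
  fixes p q h0 h1 h2 h3 :: "'a :: comm_ring_1"
  assumes "h2 = p * h1 - q * h0" "h3 = p * h2 - q * h1"
  shows "h3\<^sup>2 - q * h2\<^sup>2 = (p\<^sup>2 - 2 * q) * (h2\<^sup>2 - q * h1\<^sup>2) - q\<^sup>2 * (h1\<^sup>2 - q * h0\<^sup>2)"
  unfolding assms by (simp add: algebra_simps power2_eq_square)

lemma bisection_recurrence:
  fixes p q u0 u1 u2 u3 u4 :: "'a :: comm_ring_1"
  assumes "u2 = p * u1 - q * u0" "u3 = p * u2 - q * u1" "u4 = p * u3 - q * u2"
  shows "u4 = (p\<^sup>2 - 2 * q) * u2 - q\<^sup>2 * u0"
  unfolding assms by (simp add: algebra_simps power2_eq_square)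

lemma recurrence_vanishes_nonneg:
  fixes S :: "int \<Rightarrow> 'a :: comm_ring_1"
  assumes "S 0 = 0" "S 1 = 0" "\<And>n. n \<ge> 0 \<Longrightarrow> S (n + 2) = A * S (n + 1) - B * S n"
  shows "S (int m) = 0 \<and> S (int m + 1) = 0"
proof (induction m)
  case 0
  then show ?case using assms(1,2) by simp
next
  case (Suc m)
  have "S (int m + 2) = 0" using Suc assms(3)[of "int m"] by simp
  moreover have "int (Suc m) = int m + 1" "int (Suc m) + 1 = int m + 2" by simp_all
  ultimately show ?case using Suc by (simp only:)
qed

lemma recurrence_vanishes_nonpos:
  fixes S :: "int \<Rightarrow> 'a :: idom"
  assumes "S 0 = 0" "S 1 = 0" "B \<noteq> 0" "\<And>n. S (n + 2) = A * S (n + 1) - B * S n"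
  shows "S (- int m) = 0 \<and> S (- int m + 1) = 0"
proof (induction m)
  case 0
  then show ?case using assms(1,2) by simp
next
  case (Suc m)
  have "- int (Suc m) + 2 = - int m + 1" "- int (Suc m) + 1 = - int m" by simp_all
  then have "B * S (- int (Suc m)) = 0" using Suc assms(4)[of "- int (Suc m)"] by simp
  then show ?case using Suc \<open>B \<noteq> 0\<close> by (simp add: \<open>- int (Suc m) + 1 = - int m\<close>)
qed

definition horadam_square_defect :: "complex \<Rightarrow> complex \<Rightarrow> complex \<Rightarrow> complex \<Rightarrow> int \<Rightarrow> complex" where
  "horadam_square_defect p q a b n = (hseq p q a b (n + 1))\<^sup>2 - q * (hseq p q a b n)\<^sup>2 -
     (p\<^sup>2 - 4 * q) * ((b\<^sup>2 - a\<^sup>2 * q) * useq p q (2 * n + 1) - a * q * (2 * b - a * p) * useq p q (2 * n))"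

lemma horadam_square_defect_recurrence:
  assumes "n \<ge> 0 \<or> q \<noteq> 0"
  shows "horadam_square_defect p q a b (n + 2) =
    (p\<^sup>2 - 2 * q) * horadam_square_defect p q a b (n + 1) - q\<^sup>2 * horadam_square_defect p q a b n"
proof -
  let ?h = "hseq p q a b" and ?u = "useq p q"
  have h_rec: "?h (k + 2) = p * ?h (k + 1) - q * ?h k" if "k \<ge> n" for k
    unfolding hseq_def by (rule rec_seq_recurrence) (use assms that in auto)
  have u_rec: "?u (k + 2) = p * ?u (k + 1) - q * ?u k" if "k \<ge> 2 * n" for k
    unfolding useq_def by (rule rec_seq_recurrence) (use assms that in auto)
  have h2: "?h (n + 2) = p * ?h (n + 1) - q * ?h n"
    and h3: "?h (n + 3) = p * ?h (n + 2) - q * ?h (n + 1)"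
    using h_rec[of n] h_rec[of "n + 1"] by (simp_all add: add.assoc)
  have u2: "?u (2 * n + 2) = p * ?u (2 * n + 1) - q * ?u (2 * n)"
    and u3: "?u (2 * n + 3) = p * ?u (2 * n + 2) - q * ?u (2 * n + 1)"
    and u4: "?u (2 * n + 4) = p * ?u (2 * n + 3) - q * ?u (2 * n + 2)"
    and u5: "?u (2 * n + 5) = p * ?u (2 * n + 4) - q * ?u (2 * n + 3)"
    using u_rec[of "2 * n"] u_rec[of "2 * n + 1"] u_rec[of "2 * n + 2"] u_rec[of "2 * n + 3"]
    by (simp_all add: add.assoc)
  note squares = square_form_recurrence[OF h2 h3]
  note even = bisection_recurrence[OF u2 u3 u4]
  note odd = bisection_recurrence[OF u3 u4 u5]
  have indices: "n + 2 + 1 = n + 3" "n + 1 + 1 = n + 2" "2 * (n + 2) + 1 = 2 * n + 5"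
    "2 * (n + 2) = 2 * n + 4" "2 * (n + 1) + 1 = 2 * n + 3" "2 * (n + 1) = 2 * n + 2"
    "2 * n + 4 + 1 = 2 * n + 5" "2 * n + 2 + 1 = 2 * n + 3"
    by simp_all
  show ?thesis
    unfolding horadam_square_defect_def indices squares odd even by (simp add: algebra_simps)
qed

lemma horadam_square_defect_initial:
  "horadam_square_defect p q a b 0 = 0" "horadam_square_defect p q a b 1 = 0"
proof -
  have x: "rec_seq p q x0 x1 0 = x0" "rec_seq p q x0 x1 1 = x1"
    "rec_seq p q x0 x1 2 = p * x1 - q * x0" "rec_seq p q x0 x1 3 = p * (p * x1 - q * x0) - q * x1"
    for x0 x1
    by (simp_all add: rec_seq_def numeral_2_eq_2 numeral_3_eq_3)
  show "horadam_square_defect p q a b 0 = 0" "horadam_square_defect p q a b 1 = 0"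
    unfolding horadam_square_defect_def hseq_def useq_def by (simp_all add: x) algebra+
qed

theorem mainTheorem8:
  fixes p q a b :: complex and n :: int
  assumes "n < 0 \<longrightarrow> q \<noteq> 0"
  shows "(hseq p q a b (n + 1))\<^sup>2 - q * (hseq p q a b n)\<^sup>2 =
         (dd p q)\<^sup>2 * ((b\<^sup>2 - a\<^sup>2 * q) * useq p q (2 * n + 1)
                         - a * q * (2 * b - a * p) * useq p q (2 * n))"
proof -
  let ?S = "horadam_square_defect p q a b"
  have "?S n = 0"
  proof (cases "n \<ge> 0")
    case True
    then show ?thesis
      using recurrence_vanishes_nonneg[of ?S, OF horadam_square_defect_initial
          horadam_square_defect_recurrence, of "nat n"]
      by simp
  next
    case False
    then have "q\<^sup>2 \<noteq> 0" using assms by simp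
    then show ?thesis
      using recurrence_vanishes_nonpos[of ?S, OF horadam_square_defect_initial _
          horadam_square_defect_recurrence, of "nat (- n)"] False assms
      by simp
  qed
  then show ?thesis unfolding horadam_square_defect_def dd_def by simp
qed

end
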